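(* Let $\Gamma$ be a $3$-saturated drawing. Then \[ \sum_{a\ge 6} a\,|\mathcal{C}_a| \;\ge\; \tau(B_4,L)+\tau(B_5,L)+\tau(A_3,L)+\tau(A_5,L)+5\,N(U_6). \]
   Context: Drawings are on the sphere: vertices are distinct points, edges (of a graph possibly with parallel edges, no loops) are Jordan arcs; any two edges share finitely many points, each a common endpoint or a proper crossing; no three edges cross at one point; no edge crosses itself; adjacent edges do not cross. A drawing is $3$-plane if every edge is crossed at most three times. A lens is a region bounded by exactly two parts of edges; a drawing is non-homotopic if every lens contains a crossing or vertex in its interior. An edge with $i$ crossings is split into $i+1$ edge-segments; an edge-segment is inner if both its endpoints are crossings and outer otherwise. The planarization replaces each crossing by a degree-$4$ vertex; the drawing is connected if its planarization is connected. Cells are the components of the sphere minus all vertices and edges; the boundary $\partial c$ of a cell is a cyclic sequence alternating between edge-segments and vertices/crossings. The size $\|c\|$ of a cell is the number of vertex incidences plus the number of edge-segment incidences along $\partial c$ (crossings not counted); $\mathcal{C}_a$ is the set of cells of size $a$. A drawing is filled if for every cell $c$ and distinct vertices $u\ne v$ on $\partial c$ there is an uncrossed edge $uv$ on $\partial c$. A drawing is $3$-saturated if it is $3$-plane, non-homotopic, connected, filled, and has at least three vertices. Cell types: $A_3$: three crossings and three inner edge-segments, no vertex. $A_4$: four crossings and four inner edge-segments. $B_4$: boundary $v$, outer segment, crossing, inner segment, crossing, outer segment. $B_5$: boundary $v$, outer segment, crossing, inner segment, crossing, inner segment, crossing, outer segment. $A_5$: five crossings and five inner segments. $U_6$: boundary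 $u$, uncrossed edge $uv$, $v$, outer segment, crossing, inner segment, crossing, outer segment (two vertices $u,v$), size $6$. $L$: any cell of size at least $6$. $N(T)$ is the number of cells of type $T$. Trails: a trail is a sequence $(c_1,\dots,c_\ell)$, $\ell\ge 2$, of cells such that (1) neither $c_1$ nor $c_\ell$ is of type $A_4$; (2) consecutive cells $c_i,c_{i+1}$ share an inner edge-segment; (3) each of $c_2,\dots,c_{\ell-1}$ is an $A_4$-cell whose two edge-segments shared with its neighbours are opposite on its boundary. A trail and its reversal are the same trail. $\tau(T,T')=\tau(T',T)$ is the number of trails whose end cells are of types $T$ and $T'$. *)

theory Defs
  imports Main
begin

text \<open>
Combinatorial encoding of a connected drawing on the sphere via its planarization,
given as a combinatorial map (rotation system) of genus 0.
Darts are half-edge-segments of the planarization; nodes are vertices or crossings.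
\<^item> dtail d : node at which dart d starts
\<^item> drev d  : the same edge-segment traversed in the opposite direction
\<^item> drot d  : next dart around the node dtail d in the (fixed) rotation order
\<^item> dverts  : the vertices of the drawing (the remaining nodes are crossings)
\<^item> dedges, dpath : the edges of the drawn graph; dpath e is the list of darts
  (edge-segments) traversed by e from one endpoint to the other.
\<close>

record ('n, 'd, 'e) drawing =
  darts  :: "'d set"
  dtail  :: "'d \<Rightarrow> 'n"
  drev   :: "'d \<Rightarrow> 'd"
  drot   :: "'d \<Rightarrow> 'd"
  dverts :: "'n set"
  dedges :: "'e set"
  dpath  :: "'e \<Rightarrow> 'd list"

definition dhead :: "('n,'d,'e) drawing \<Rightarrow> 'd \<Rightarrow> 'n" where
  "dhead G d = dtail G (drev G d)"

definition nodes :: "('n,'d,'e) drawing \<Rightarrow> 'n set" where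
  "nodes G = dtail G ` darts G"

definition crossings :: "('n,'d,'e) drawing \<Rightarrow> 'n set" where
  "crossings G = nodes G - dverts G"

definition darts_at :: "('n,'d,'e) drawing \<Rightarrow> 'n \<Rightarrow> 'd set" where
  "darts_at G x = {d \<in> darts G. dtail G d = x}"

text \<open>Face-traversal permutation: the dart following d on the boundary walk of its cell.\<close>
definition fphi :: "('n,'d,'e) drawing \<Rightarrow> 'd \<Rightarrow> 'd" where
  "fphi G d = drot G (drev G d)"

definition orbit :: "('a \<Rightarrow> 'a) \<Rightarrow> 'a \<Rightarrow> 'a set" where
  "orbit f x = {(f ^^ k) x | k. True}"

text \<open>Cells: the orbits of fphi; a cell is identified with the set of darts of its boundary walk.\<close>
definition cells :: "('n,'d,'e) drawing \<Rightarrow> 'd set set" where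
  "cells G = (\<lambda>d. orbit (fphi G) d) ` darts G"

definition connected_planarization :: "('n,'d,'e) drawing \<Rightarrow> bool" where
  "connected_planarization G \<longleftrightarrow>
     (\<forall>d\<in>darts G. \<forall>d'\<in>darts G.
        (d, d') \<in> ({(x, drev G x) | x. x \<in> darts G} \<union> {(x, drot G x) | x. x \<in> darts G})\<^sup>*)"

text \<open>A connected combinatorial map embedded in the sphere (Euler characteristic 2).\<close>
definition sphere_map :: "('n,'d,'e) drawing \<Rightarrow> bool" where
  "sphere_map G \<longleftrightarrow>
     finite (darts G) \<and> darts G \<noteq> {} \<and>
     bij_betw (drev G) (darts G) (darts G) \<and>
     (\<forall>d\<in>darts G. drev G (drev G d) = d \<and> drev G d \<noteq> d) \<and>
     bij_betw (drot G) (darts G) (darts G) \<and>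
     (\<forall>d\<in>darts G. dtail G (drot G d) = dtail G d) \<and>
     (\<forall>d\<in>darts G. \<forall>d'\<in>darts G. dtail G d = dtail G d' \<longrightarrow> (\<exists>k. (drot G ^^ k) d = d')) \<and>
     connected_planarization G \<and>
     card (nodes G) + card (cells G) = card (darts G) div 2 + 2"

definition walk_nodes :: "('n,'d,'e) drawing \<Rightarrow> 'd list \<Rightarrow> 'n list" where
  "walk_nodes G ws = map (dtail G) ws @ [dhead G (last ws)]"

definition rev_walk :: "('n,'d,'e) drawing \<Rightarrow> 'd list \<Rightarrow> 'd list" where
  "rev_walk G ws = rev (map (drev G) ws)"

text \<open>An edge runs from a vertex to a vertex through crossings, going straight
  (to the opposite dart in the rotation) at each crossing, and visits no node twice
  (no self-crossings, no loops).\<close>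
definition edge_walk :: "('n,'d,'e) drawing \<Rightarrow> 'd list \<Rightarrow> bool" where
  "edge_walk G ws \<longleftrightarrow>
     ws \<noteq> [] \<and> set ws \<subseteq> darts G \<and>
     dtail G (hd ws) \<in> dverts G \<and> dhead G (last ws) \<in> dverts G \<and>
     (\<forall>i. Suc i < length ws \<longrightarrow>
         dhead G (ws ! i) \<in> crossings G \<and>
         ws ! Suc i = drot G (drot G (drev G (ws ! i)))) \<and>
     distinct (walk_nodes G ws)"

definition edge_darts :: "('n,'d,'e) drawing \<Rightarrow> 'e \<Rightarrow> 'd set" where
  "edge_darts G e = set (dpath G e) \<union> drev G ` set (dpath G e)"

definition edge_ends :: "('n,'d,'e) drawing \<Rightarrow> 'e \<Rightarrow> 'n set" where
  "edge_ends G e = {dtail G (hd (dpath G e)), dhead G (last (dpath G e))}"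

definition edge_nodes :: "('n,'d,'e) drawing \<Rightarrow> 'e \<Rightarrow> 'n set" where
  "edge_nodes G e = set (walk_nodes G (dpath G e))"

definition drawing :: "('n,'d,'e) drawing \<Rightarrow> bool" where
  "drawing G \<longleftrightarrow>
     sphere_map G \<and>
     dverts G \<subseteq> nodes G \<and>
     (\<forall>x\<in>crossings G. card (darts_at G x) = 4) \<and>
     finite (dedges G) \<and>
     (\<forall>e\<in>dedges G. edge_walk G (dpath G e)) \<and>
     (\<forall>d\<in>darts G. \<exists>!e. e \<in> dedges G \<and> d \<in> edge_darts G e) \<and>
     (\<forall>e1\<in>dedges G. \<forall>e2\<in>dedges G.
        e1 \<noteq> e2 \<and> edge_nodes G e1 \<inter> edge_nodes G e2 \<inter> crossings G \<noteq> {}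
        \<longrightarrow> edge_ends G e1 \<inter> edge_ends G e2 = {})"

definition three_plane :: "('n,'d,'e) drawing \<Rightarrow> bool" where
  "three_plane G \<longleftrightarrow> (\<forall>e\<in>dedges G. length (dpath G e) - 1 \<le> 3)"

definition edge_part :: "('n,'d,'e) drawing \<Rightarrow> 'd list \<Rightarrow> bool" where
  "edge_part G P \<longleftrightarrow> P \<noteq> [] \<and>
     (\<exists>e\<in>dedges G. \<exists>xs ys. dpath G e = xs @ P @ ys \<or> rev_walk G (dpath G e) = xs @ P @ ys)"

definition lens_cycle :: "('n,'d,'e) drawing \<Rightarrow> 'd list \<Rightarrow> bool" where
  "lens_cycle G W \<longleftrightarrow>
     (\<exists>P Q. edge_part G P \<and> edge_part G Q \<and>
        dtail G (hd P) = dtail G (hd Q) \<and> dhead G (last P) = dhead G (last Q) \<and>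
        set P \<inter> (set Q \<union> drev G ` set Q) = {} \<and>
        W = P @ rev_walk G Q \<and> distinct (map (dtail G) W))"

text \<open>Darts at the nodes of a closed walk W lying strictly on one (the same) side of W:
  at the node where W leaves along W!i, those strictly between W!i and the reverse
  of the incoming dart, in rotation order.\<close>
definition side_darts :: "('n,'d,'e) drawing \<Rightarrow> 'd list \<Rightarrow> 'd set" where
  "side_darts G W = {d. \<exists>i<length W. \<exists>k>0. d = (drot G ^^ k) (W ! i) \<and>
      (\<forall>j\<in>{1..k}. (drot G ^^ j) (W ! i) \<noteq> drev G (W ! ((i + length W - 1) mod length W)))}"

text \<open>All darts of the planarization in the region on that side of W.\<close>
inductive_set side_region :: "('n,'d,'e) drawing \<Rightarrow> 'd list \<Rightarrow> 'd set"
  for G :: "('n,'d,'e) drawing" and W :: "'d list" where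
  base: "d \<in> side_darts G W \<Longrightarrow> d \<in> side_region G W"
| rev: "d \<in> side_region G W \<Longrightarrow> drev G d \<in> side_region G W"
| rot: "d \<in> side_region G W \<Longrightarrow> dtail G d \<notin> set (map (dtail G) W) \<Longrightarrow>
        drot G d \<in> side_region G W"

definition side_has_node :: "('n,'d,'e) drawing \<Rightarrow> 'd list \<Rightarrow> bool" where
  "side_has_node G W \<longleftrightarrow> (\<exists>d\<in>side_region G W. dtail G d \<notin> set (map (dtail G) W))"

text \<open>Non-homotopic: both regions bounded by any lens boundary contain a node in their interior.\<close>
definition non_homotopic :: "('n,'d,'e) drawing \<Rightarrow> bool" where
  "non_homotopic G \<longleftrightarrow>
     (\<forall>W. lens_cycle G W \<longrightarrow> side_has_node G W \<and> side_has_node G (rev_walk G W))"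

definition uncrossed :: "('n,'d,'e) drawing \<Rightarrow> 'e \<Rightarrow> bool" where
  "uncrossed G e \<longleftrightarrow> length (dpath G e) = 1"

definition filled :: "('n,'d,'e) drawing \<Rightarrow> bool" where
  "filled G \<longleftrightarrow>
     (\<forall>c\<in>cells G. \<forall>u\<in>dverts G. \<forall>v\<in>dverts G.
        u \<noteq> v \<and> u \<in> dtail G ` c \<and> v \<in> dtail G ` c \<longrightarrow>
        (\<exists>e\<in>dedges G. uncrossed G e \<and> edge_ends G e = {u, v} \<and>
           (\<exists>d\<in>set (dpath G e). d \<in> c \<or> drev G d \<in> c)))"

definition three_saturated :: "('n,'d,'e) drawing \<Rightarrow> bool" where
  "three_saturated G \<longleftrightarrow>
     drawing G \<and> three_plane G \<and> non_homotopic G \<and> connected_planarization G \<and>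
     filled G \<and> card (dverts G) \<ge> 3"

text \<open>Size of a cell: edge-segment incidences plus vertex incidences along its boundary.\<close>
definition csize :: "('n,'d,'e) drawing \<Rightarrow> 'd set \<Rightarrow> nat" where
  "csize G c = card c + card {d \<in> c. dtail G d \<in> dverts G}"

definition cells_of_size :: "('n,'d,'e) drawing \<Rightarrow> nat \<Rightarrow> 'd set set" where
  "cells_of_size G a = {c \<in> cells G. csize G c = a}"

definition nvert :: "('n,'d,'e) drawing \<Rightarrow> 'd set \<Rightarrow> nat" where
  "nvert G c = card {d \<in> c. dtail G d \<in> dverts G}"

definition inner_seg :: "('n,'d,'e) drawing \<Rightarrow> 'd \<Rightarrow> bool" where
  "inner_seg G d \<longleftrightarrow> dtail G d \<in> crossings G \<and> dhead G d \<in> crossings G"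

definition typeA :: "nat \<Rightarrow> ('n,'d,'e) drawing \<Rightarrow> 'd set \<Rightarrow> bool" where
  "typeA k G c \<longleftrightarrow> card c = k \<and> (\<forall>d\<in>c. dtail G d \<in> crossings G)"

abbreviation "A3 \<equiv> typeA 3"
abbreviation "A4 \<equiv> typeA 4"
abbreviation "A5 \<equiv> typeA 5"

definition B4 :: "('n,'d,'e) drawing \<Rightarrow> 'd set \<Rightarrow> bool" where
  "B4 G c \<longleftrightarrow> card c = 3 \<and> nvert G c = 1"

definition B5 :: "('n,'d,'e) drawing \<Rightarrow> 'd set \<Rightarrow> bool" where
  "B5 G c \<longleftrightarrow> card c = 4 \<and> nvert G c = 1"

definition U6 :: "('n,'d,'e) drawing \<Rightarrow> 'd set \<Rightarrow> bool" where
  "U6 G c \<longleftrightarrow> card c = 4 \<and> nvert G c = 2 \<and>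
     (\<exists>d\<in>c. dtail G d \<in> dverts G \<and> dhead G d \<in> dverts G \<and>
        (\<exists>e\<in>dedges G. uncrossed G e \<and> (dpath G e = [d] \<or> dpath G e = [drev G d])))"

definition Lc :: "('n,'d,'e) drawing \<Rightarrow> 'd set \<Rightarrow> bool" where
  "Lc G c \<longleftrightarrow> csize G c \<ge> 6"

definition Ncount :: "('n,'d,'e) drawing \<Rightarrow> (('n,'d,'e) drawing \<Rightarrow> 'd set \<Rightarrow> bool) \<Rightarrow> nat" where
  "Ncount G T = card {c \<in> cells G. T G c}"

text \<open>Trails: sequences of cells; ds!i is a dart of an inner edge-segment shared by
  cs!i and cs!(i+1) (on the boundary of cs!i, its reverse on that of cs!(i+1)).\<close>
definition trail :: "('n,'d,'e) drawing \<Rightarrow> 'd set list \<Rightarrow> bool" where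
  "trail G cs \<longleftrightarrow>
     length cs \<ge> 2 \<and> set cs \<subseteq> cells G \<and>
     \<not> A4 G (hd cs) \<and> \<not> A4 G (last cs) \<and>
     (\<exists>ds. length ds = length cs - 1 \<and>
        (\<forall>i<length ds. ds ! i \<in> cs ! i \<and> drev G (ds ! i) \<in> cs ! Suc i \<and> inner_seg G (ds ! i)) \<and>
        (\<forall>i. 0 < i \<and> i < length cs - 1 \<longrightarrow>
            A4 G (cs ! i) \<and> ds ! i = fphi G (fphi G (drev G (ds ! (i - 1))))))"

text \<open>Number of trails (a trail identified with its reversal) with end cells of types T and T'.\<close>
definition tau :: "('n,'d,'e) drawing \<Rightarrow> (('n,'d,'e) drawing \<Rightarrow> 'd set \<Rightarrow> bool)
                    \<Rightarrow> (('n,'d,'e) drawing \<Rightarrow> 'd set \<Rightarrow> bool) \<Rightarrow> nat" where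
  "tau G T T' = card {{cs, rev cs} | cs. trail G cs \<and>
      ((T G (hd cs) \<and> T' G (last cs)) \<or> (T' G (hd cs) \<and> T G (last cs)))}"

end

theory Submission
  imports Defs
begin

text \<open>Orient each trail so that it starts in its end cell \<open>c\<close> of size at least 6.
  It is then determined by the inner edge-segment through which it leaves \<open>c\<close>: inside
  an \<open>A\<^sub>4\<close>-cell, whose boundary walk has period 4, a trail leaves through the segment
  opposite to the one it entered by.  So no more trails start in \<open>c\<close> than \<open>c\<close> has inner
  edge-segments, and these are at most \<open>\<parallel>c\<parallel>\<close>.  The four trail counts of the theorem
  concern disjoint sets of trails, since their other end cells have different types.
  A \<open>U\<^sub>6\<close>-cell has size 6 but at most one inner segment, which leaves room for the
  extra 5.\<close>

lemma funpow_period_exists: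
  assumes "finite S" "bij_betw f S S" "x \<in> S"
  obtains p where "0 < p" "(f ^^ p) x = x"
proof -
  have "(\<lambda>k. (f ^^ k) x) ` UNIV \<subseteq> S"
    using bij_betwE[OF bij_betw_funpow[OF assms(2)]] assms(3) by blast
  then have "\<not> inj (\<lambda>k. (f ^^ k) x)"
    using inj_on_finite[OF _ _ assms(1)] infinite_UNIV_nat by blast
  then obtain i j where ij: "i < j" "(f ^^ i) x = (f ^^ j) x"
    unfolding inj_def by (metis nat_neq_iff)
  have "(f ^^ i) ((f ^^ (j - i)) x) = (f ^^ i) x"
    using ij by (simp flip: funpow_add comp_apply[of "f ^^ i"])
  moreover have "(f ^^ (j - i)) x \<in> S"
    using bij_betwE[OF bij_betw_funpow[OF assms(2)]] assms(3) by blast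
  ultimately have "(f ^^ (j - i)) x = x"
    using bij_betw_imp_inj_on[OF bij_betw_funpow[OF assms(2)]] assms(3) by (meson inj_onD)
  with ij show thesis using that[of "j - i"] by simp
qed

lemma orbit_eq_funpow_image:
  assumes "(f ^^ p) x = x" "0 < p"
  shows "orbit f x = (\<lambda>k. (f ^^ k) x) ` {0..<p}"
proof
  show "orbit f x \<subseteq> (\<lambda>k. (f ^^ k) x) ` {0..<p}"
    unfolding orbit_def using funpow_mod_eq[OF assms(1)] assms(2)
    by (auto intro!: image_eqI[where x = "_ mod p"])
qed (auto simp: orbit_def)

lemma funpow_card_orbit:
  assumes "finite S" "bij_betw f S S" "x \<in> S"
  shows "(f ^^ card (orbit f x)) x = x"
proof -
  define p where "p = (LEAST p. 0 < p \<and> (f ^^ p) x = x)"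
  obtain q where "0 < q" "(f ^^ q) x = x" using funpow_period_exists[OF assms] .
  then have p: "0 < p" "(f ^^ p) x = x"
    unfolding p_def by (metis (mono_tags, lifting) LeastI)+
  have "\<And>m. 0 < m \<Longrightarrow> m < p \<Longrightarrow> (f ^^ m) x \<noteq> x"
    unfolding p_def using not_less_Least by blast
  then have "card (orbit f x) = p"
    using orbit_eq_funpow_image[OF p(2,1)] inj_on_funpow_least[OF p(2)] by (simp add: card_image)
  with p show ?thesis by simp
qed

lemma orbit_subset: "y \<in> orbit f x \<Longrightarrow> orbit f y \<subseteq> orbit f x"
  unfolding orbit_def by (auto simp flip: comp_apply[of "f ^^ _"] funpow_add)

lemma orbit_eq_orbit:
  assumes "finite S" "bij_betw f S S" "x \<in> S" "y \<in> orbit f x"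
  shows "orbit f y = orbit f x"
proof
  show "orbit f y \<subseteq> orbit f x" using orbit_subset[OF assms(4)] .
  obtain p where p: "0 < p" "(f ^^ p) x = x" using funpow_period_exists[OF assms(1-3)] .
  obtain k where k: "y = (f ^^ k) x" using assms(4) unfolding orbit_def by blast
  have "(f ^^ ((p - 1) * k)) y = (f ^^ (p * k)) x"
    using p(1) by (simp add: k flip: comp_apply[of "f ^^ _"] funpow_add) (simp add: algebra_simps)
  also have "\<dots> = x" using funpow_mod_eq[OF p(2), of "p * k"] by simp
  finally have "x \<in> orbit f y" unfolding orbit_def by blast
  then show "orbit f x \<subseteq> orbit f y" by (rule orbit_subset)
qed

lemma orbit_subset_of_bij_betw: "bij_betw f S S \<Longrightarrow> x \<in> S \<Longrightarrow> orbit f x \<subseteq> S"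
  unfolding orbit_def using bij_betwE[OF bij_betw_funpow] by blast

lemma sphere_mapD:
  assumes "sphere_map G"
  shows "finite (darts G)" "bij_betw (drev G) (darts G) (darts G)"
    "bij_betw (drot G) (darts G) (darts G)"
    "\<And>d. d \<in> darts G \<Longrightarrow> drev G (drev G d) = d"
    "\<And>d. d \<in> darts G \<Longrightarrow> dtail G (drot G d) = dtail G d"
  using assms unfolding sphere_map_def by simp_all

lemma bij_betw_fphi: "sphere_map G \<Longrightarrow> bij_betw (fphi G) (darts G) (darts G)"
  unfolding fphi_def using bij_betw_trans[OF sphere_mapD(2,3)] by (simp add: comp_def)

lemma drev_in_darts: "sphere_map G \<Longrightarrow> d \<in> darts G \<Longrightarrow> drev G d \<in> darts G"
  using bij_betwE[OF sphere_mapD(2)] by blast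

lemma dtail_fphi: "sphere_map G \<Longrightarrow> d \<in> darts G \<Longrightarrow> dtail G (fphi G d) = dhead G d"
  unfolding fphi_def dhead_def by (simp add: sphere_mapD(5) drev_in_darts)

lemma cell_subset_darts: "sphere_map G \<Longrightarrow> c \<in> cells G \<Longrightarrow> c \<subseteq> darts G"
  unfolding cells_def using orbit_subset_of_bij_betw[OF bij_betw_fphi, of G] by auto

lemma cell_eq_orbit:
  assumes "sphere_map G" "c \<in> cells G" "x \<in> c"
  shows "c = orbit (fphi G) x"
proof -
  obtain z where "z \<in> darts G" "c = orbit (fphi G) z" using assms(2) unfolding cells_def by blast
  with assms(3) show ?thesis
    using orbit_eq_orbit[OF sphere_mapD(1) bij_betw_fphi, OF assms(1,1)] by blast
qed

lemma finite_cells: "sphere_map G \<Longrightarrow> finite (cells G)"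
  unfolding cells_def using sphere_mapD(1) by (rule finite_imageI)

lemma finite_cell: "sphere_map G \<Longrightarrow> c \<in> cells G \<Longrightarrow> finite c"
  using finite_subset[OF cell_subset_darts sphere_mapD(1)] .

lemma fphi_funpow_card_cell:
  assumes "sphere_map G" "c \<in> cells G" "x \<in> c"
  shows "(fphi G ^^ card c) x = x"
  using funpow_card_orbit[OF sphere_mapD(1) bij_betw_fphi, OF assms(1,1)]
    cell_subset_darts[OF assms(1,2)] assms(3) cell_eq_orbit[OF assms] by auto

definition inner_darts :: "('n,'d,'e) drawing \<Rightarrow> 'd set \<Rightarrow> 'd set" where
  "inner_darts G c = {d \<in> c. inner_seg G d}"

lemma card_inner_darts_le_csize:
  "sphere_map G \<Longrightarrow> c \<in> cells G \<Longrightarrow> card (inner_darts G c) \<le> csize G c"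
  unfolding inner_darts_def csize_def
  using card_mono[OF finite_cell, of G c "{d \<in> c. inner_seg G d}"] by auto

lemma card_inner_darts_U6:
  assumes sm: "sphere_map G" and c: "c \<in> cells G" and U6: "U6 G c"
  shows "card (inner_darts G c) \<le> 1"
proof -
  let ?f = "fphi G"
  obtain d where d: "d \<in> c" "dtail G d \<in> dverts G" "dhead G d \<in> dverts G"
    using U6 unfolding U6_def by blast
  have period: "(?f ^^ 4) d = d" using fphi_funpow_card_cell[OF sm c d(1)] U6 unfolding U6_def by simp
  then have "c = (\<lambda>k. (?f ^^ k) d) ` {0..<4}"
    using cell_eq_orbit[OF sm c d(1)] orbit_eq_funpow_image[OF period] by simp
  also have "\<dots> = {d, ?f d, ?f (?f d), ?f (?f (?f d))}"
    by (simp add: numeral_eq_Suc atLeast0_lessThan_Suc insert_commute)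
  finally have c_eq: "c = {d, ?f d, ?f (?f d), ?f (?f (?f d))}" .
  have darts: "d \<in> darts G" "?f (?f (?f d)) \<in> darts G"
    using cell_subset_darts[OF sm c] c_eq by auto
  have "dtail G (?f d) \<in> dverts G" using dtail_fphi[OF sm darts(1)] d(3) by simp
  moreover have "dhead G (?f (?f (?f d))) \<in> dverts G"
    using dtail_fphi[OF sm darts(2)] period d(2) by (simp add: numeral_eq_Suc)
  ultimately have "?f d \<notin> inner_darts G c" "?f (?f (?f d)) \<notin> inner_darts G c"
    unfolding inner_darts_def inner_seg_def crossings_def by auto
  moreover have "d \<notin> inner_darts G c" using d(2) unfolding inner_darts_def inner_seg_def crossings_def by blast
  ultimately have "inner_darts G c \<subseteq> {?f (?f d)}" using c_eq unfolding inner_darts_def by blast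
  then have "card (inner_darts G c) \<le> card {?f (?f d)}" by (intro card_mono) simp_all
  then show ?thesis by simp
qed

definition trail_links :: "('n,'d,'e) drawing \<Rightarrow> 'd set list \<Rightarrow> 'd list \<Rightarrow> bool" where
  "trail_links G cs ds \<longleftrightarrow> length ds = length cs - 1 \<and>
     (\<forall>i<length ds. ds ! i \<in> cs ! i \<and> drev G (ds ! i) \<in> cs ! Suc i \<and> inner_seg G (ds ! i)) \<and>
     (\<forall>i. 0 < i \<and> i < length cs - 1 \<longrightarrow>
        A4 G (cs ! i) \<and> ds ! i = fphi G (fphi G (drev G (ds ! (i - 1)))))"

lemma trail_iff_links:
  "trail G cs \<longleftrightarrow> 2 \<le> length cs \<and> set cs \<subseteq> cells G \<and> \<not> A4 G (hd cs) \<and> \<not> A4 G (last cs) \<and>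
     (\<exists>ds. trail_links G cs ds)"
  unfolding trail_def trail_links_def by blast

lemma trail_linksD:
  assumes "trail_links G cs ds"
  shows "length ds = length cs - 1"
    and "i < length ds \<Longrightarrow> ds ! i \<in> cs ! i \<and> drev G (ds ! i) \<in> cs ! Suc i \<and> inner_seg G (ds ! i)"
    and "0 < i \<Longrightarrow> i < length cs - 1 \<Longrightarrow>
      A4 G (cs ! i) \<and> ds ! i = fphi G (fphi G (drev G (ds ! (i - 1))))"
  using assms unfolding trail_links_def by auto

lemma trail_links_in_darts:
  assumes "sphere_map G" "set cs \<subseteq> cells G" "trail_links G cs ds" "i < length ds"
  shows "ds ! i \<in> darts G"
proof -
  have "ds ! i \<in> cs ! i" "i < length cs" using trail_linksD[OF assms(3)] assms(4) by auto
  then show ?thesis using cell_subset_darts[OF assms(1)] assms(2) nth_mem by blast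
qed

lemma inner_seg_drev:
  "sphere_map G \<Longrightarrow> d \<in> darts G \<Longrightarrow> inner_seg G d \<Longrightarrow> inner_seg G (drev G d)"
  unfolding inner_seg_def dhead_def by (simp add: sphere_mapD(4))

lemma fphi_fphi_A4_cell:
  assumes "sphere_map G" "c \<in> cells G" "A4 G c" "z \<in> c"
  shows "fphi G (fphi G (fphi G (fphi G z))) = z"
  using fphi_funpow_card_cell[OF assms(1,2,4)] assms(3) unfolding typeA_def
  by (simp add: numeral_eq_Suc)

lemma trail_links_rev:
  assumes sm: "sphere_map G" and cells: "set cs \<subseteq> cells G" and ds: "trail_links G cs ds"
  shows "trail_links G (rev cs) (rev (map (drev G) ds))"
proof -
  define n where "n = length cs"
  define ds' where "ds' = rev (map (drev G) ds)"
  have len: "length ds = n - 1" "length ds' = n - 1"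
    using trail_linksD(1)[OF ds] unfolding n_def ds'_def by auto
  note link = trail_linksD(2)[OF ds, unfolded len(1)]
  note inner = trail_linksD(3)[OF ds, folded n_def]
  have darts: "\<And>i. i < n - 1 \<Longrightarrow> ds ! i \<in> darts G"
    using trail_links_in_darts[OF sm cells ds] len by simp
  have ds'_nth: "\<And>i. i < n - 1 \<Longrightarrow> ds' ! i = drev G (ds ! (n - 2 - i))"
    unfolding ds'_def using len by (simp add: rev_nth)
  have rev_cs: "\<And>i. i < n \<Longrightarrow> rev cs ! i = cs ! (n - 1 - i)"
    unfolding n_def by (simp add: rev_nth)
  have "trail_links G (rev cs) ds'"
    unfolding trail_links_def
  proof (intro conjI allI impI)
    show "length ds' = length (rev cs) - 1" using len n_def by simp
  next
    fix i assume "i < length ds'"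
    then have i: "i < n - 1" "n - 2 - i < n - 1" using len by auto
    have "Suc (n - 2 - i) = n - 1 - i" "n - 1 - Suc i = n - 2 - i" using i by auto
    then show "ds' ! i \<in> rev cs ! i" "drev G (ds' ! i) \<in> rev cs ! Suc i"
      using link[OF i(2)] rev_cs ds'_nth[OF i(1)] sphere_mapD(4)[OF sm darts[OF i(2)]] i(1) by auto
    show "inner_seg G (ds' ! i)"
      using ds'_nth[OF i(1)] inner_seg_drev[OF sm darts[OF i(2)]] link[OF i(2)] by simp
  next
    fix i assume "0 < i \<and> i < length (rev cs) - 1"
    then have i: "0 < i" "i < n - 1" unfolding n_def by auto
    define j where "j = n - 1 - i"
    have j: "0 < j" "j < n - 1" "j - 1 < n - 1" using i unfolding j_def by auto
    have "rev cs ! i = cs ! j" using rev_cs i unfolding j_def by simp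
    then show "A4 G (rev cs ! i)" using inner[OF j(1,2)] by simp
    have "ds' ! i = drev G (ds ! (j - 1))" using ds'_nth[OF i(2)] unfolding j_def by simp
    moreover have "drev G (ds' ! (i - 1)) = ds ! j"
      using ds'_nth[of "i - 1"] i sphere_mapD(4)[OF sm darts[OF j(2)]] unfolding j_def by simp
    moreover have "drev G (ds ! (j - 1)) \<in> cs ! j" using link[OF j(3)] j(1) by simp
    moreover have "cs ! j \<in> cells G" using cells j(2) unfolding n_def by auto
    ultimately show "ds' ! i = fphi G (fphi G (drev G (ds' ! (i - 1))))"
      using fphi_fphi_A4_cell[OF sm] inner[OF j(1,2)] by metis
  qed
  then show ?thesis unfolding ds'_def .
qed

lemma trail_rev: "sphere_map G \<Longrightarrow> trail G cs \<Longrightarrow> trail G (rev cs)"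
  unfolding trail_iff_links using trail_links_rev by (auto simp: hd_rev last_rev)

lemma trail_nth_eq_if_first_link_eq:
  assumes sm: "sphere_map G" and tr: "trail G cs" "trail G cs'"
    and ds: "trail_links G cs ds" and ds': "trail_links G cs' ds'"
    and hd_eq: "hd ds = hd ds'" and le: "length cs \<le> length cs'" and i: "i < length cs"
  shows "cs ! i = cs' ! i"
proof -
  define n where "n = length cs"
  have n: "2 \<le> n" "n \<le> length cs'" "set cs \<subseteq> cells G" "set cs' \<subseteq> cells G"
    using tr le unfolding trail_iff_links n_def by auto
  have len: "length ds = n - 1" "length ds' = length cs' - 1"
    using trail_linksD(1)[OF ds] trail_linksD(1)[OF ds'] unfolding n_def by auto
  note link = trail_linksD(2)[OF ds, unfolded len(1)]
  note link' = trail_linksD(2)[OF ds', unfolded len(2)]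
  have links_eq: "ds ! j = ds' ! j" if "j < n - 1" for j
    using that
  proof (induction j)
    case 0
    have "ds \<noteq> []" "ds' \<noteq> []" using len n by auto
    then show ?case using hd_eq by (simp add: hd_conv_nth)
  next
    case (Suc j)
    have "0 < Suc j" "Suc j < length cs - 1" "Suc j < length cs' - 1"
      using Suc.prems n(2) unfolding n_def by auto
    with Suc.IH Suc.prems show ?case
      using trail_linksD(3)[OF ds] trail_linksD(3)[OF ds'] by (metis Suc_lessD diff_Suc_1)
  qed
  obtain x where x: "x \<in> cs ! i" "x \<in> cs' ! i"
  proof (cases "i < n - 1")
    case True
    then have "i < length cs' - 1" using n(2) by simp
    then have "ds ! i \<in> cs' ! i" using link' links_eq[OF True] by simp
    with link[OF True] show thesis by (intro that) simp_all
  next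
    case False
    then have j: "i - 1 < n - 1" "i - 1 < length cs' - 1" "Suc (i - 1) = i"
      using i n(1,2) unfolding n_def by auto
    have "drev G (ds ! (i - 1)) \<in> cs ! i" using link[OF j(1)] j(3) by simp
    moreover have "drev G (ds ! (i - 1)) \<in> cs' ! i" using link'[OF j(2)] j(3) links_eq[OF j(1)] by simp
    ultimately show thesis by (rule that)
  qed
  have "i < length cs'" using i le by simp
  then have "cs ! i \<in> cells G" "cs' ! i \<in> cells G"
    using subsetD[OF n(3) nth_mem[OF i]] subsetD[OF n(4) nth_mem] by simp_all
  then show ?thesis using cell_eq_orbit[OF sm _ x(1)] cell_eq_orbit[OF sm _ x(2)] by simp
qed

lemma trail_eq_if_first_link_eq_of_le:
  assumes sm: "sphere_map G" and tr: "trail G cs" "trail G cs'"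
    and ds: "trail_links G cs ds" and ds': "trail_links G cs' ds'"
    and hd_eq: "hd ds = hd ds'" and le: "length cs \<le> length cs'"
  shows "cs = cs'"
proof -
  note nth_eq = trail_nth_eq_if_first_link_eq[OF assms]
  define n where "n = length cs"
  have n: "2 \<le> n" "\<not> A4 G (last cs)" using tr unfolding trail_iff_links n_def by auto
  have "length cs' = n"
  proof (rule ccontr)
    assume "length cs' \<noteq> n"
    then have "0 < n - 1" "n - 1 < length cs' - 1" using n(1) le unfolding n_def by auto
    then have "A4 G (cs' ! (n - 1))" using trail_linksD(3)[OF ds'] by blast
    moreover have "cs \<noteq> []" using n(1) unfolding n_def by auto
    then have "last cs = cs ! (n - 1)" unfolding n_def by (rule last_conv_nth)
    ultimately show False using nth_eq[of "n - 1"] n unfolding n_def by simp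
  qed
  then show ?thesis using nth_eq unfolding n_def by (simp add: nth_equalityI)
qed

lemma trail_eq_if_first_link_eq:
  assumes "sphere_map G" "trail G cs" "trail G cs'"
    "trail_links G cs ds" "trail_links G cs' ds'" "hd ds = hd ds'"
  shows "cs = cs'"
proof (cases "length cs \<le> length cs'")
  case True
  then show ?thesis by (rule trail_eq_if_first_link_eq_of_le[OF assms])
next
  case False
  then show ?thesis
    using trail_eq_if_first_link_eq_of_le[OF assms(1,3,2,5,4) assms(6)[symmetric]] by simp
qed

text \<open>The links of a trail need not be unique (two cells may share several inner
  segments); any choice works.\<close>

definition first_link :: "('n,'d,'e) drawing \<Rightarrow> 'd set list \<Rightarrow> 'd" where
  "first_link G cs = hd (SOME ds. trail_links G cs ds)"

lemma trail_links_first_link: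
  assumes "trail G cs"
  obtains ds where "trail_links G cs ds" "first_link G cs = hd ds"
proof -
  have "\<exists>ds. trail_links G cs ds" using assms unfolding trail_iff_links by blast
  then have "trail_links G cs (SOME ds. trail_links G cs ds)" by (rule someI_ex)
  then show thesis using that unfolding first_link_def by blast
qed

lemma first_link_in_inner_darts:
  assumes "trail G cs"
  shows "first_link G cs \<in> inner_darts G (hd cs)"
proof -
  obtain ds where ds: "trail_links G cs ds" "first_link G cs = hd ds"
    using trail_links_first_link[OF assms] .
  have "2 \<le> length cs" using assms unfolding trail_iff_links by blast
  then have ne: "ds \<noteq> []" "cs \<noteq> []" and "0 < length ds"
    using trail_linksD(1)[OF ds(1)] by auto
  then have "ds ! 0 \<in> cs ! 0" "inner_seg G (ds ! 0)"
    using trail_linksD(2)[OF ds(1)] by auto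
  then show ?thesis using ds(2) ne unfolding inner_darts_def by (simp add: hd_conv_nth)
qed

lemma inj_on_first_link: "sphere_map G \<Longrightarrow> inj_on (first_link G) {cs. trail G cs}"
proof (rule inj_onI)
  fix cs cs' assume sm: "sphere_map G" and "cs \<in> {cs. trail G cs}" "cs' \<in> {cs. trail G cs}"
    and eq: "first_link G cs = first_link G cs'"
  then have tr: "trail G cs" "trail G cs'" by simp_all
  obtain ds where ds: "trail_links G cs ds" "first_link G cs = hd ds"
    using trail_links_first_link[OF tr(1)] .
  obtain ds' where ds': "trail_links G cs' ds'" "first_link G cs' = hd ds'"
    using trail_links_first_link[OF tr(2)] .
  show "cs = cs'" using trail_eq_if_first_link_eq[OF sm tr ds(1) ds'(1)] ds(2) ds'(2) eq by simp
qed

definition trails_from :: "('n,'d,'e) drawing \<Rightarrow> 'd set \<Rightarrow> 'd set list set" where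
  "trails_from G c = {cs. trail G cs \<and> hd cs = c}"

lemma first_link_trails_from: "first_link G ` trails_from G c \<subseteq> inner_darts G c"
  using first_link_in_inner_darts unfolding trails_from_def by blast

lemma inj_on_first_link_trails_from: "sphere_map G \<Longrightarrow> inj_on (first_link G) (trails_from G c)"
  using inj_on_first_link by (rule inj_on_subset) (auto simp: trails_from_def)

lemma finite_inner_darts: "sphere_map G \<Longrightarrow> c \<in> cells G \<Longrightarrow> finite (inner_darts G c)"
  unfolding inner_darts_def by (auto dest: finite_cell)

lemma finite_trails_from: "sphere_map G \<Longrightarrow> c \<in> cells G \<Longrightarrow> finite (trails_from G c)"
  using inj_on_finite[OF inj_on_first_link_trails_from first_link_trails_from finite_inner_darts] .

lemma card_trails_from_le:
  "sphere_map G \<Longrightarrow> c \<in> cells G \<Longrightarrow> card (trails_from G c) \<le> card (inner_darts G c)"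
  using card_inj_on_le[OF inj_on_first_link_trails_from first_link_trails_from finite_inner_darts] .

lemma tau_le_card_trails:
  assumes sm: "sphere_map G" and fin: "finite {cs. trail G cs \<and> T' G (hd cs) \<and> T G (last cs)}"
  shows "tau G T T' \<le> card {cs. trail G cs \<and> T' G (hd cs) \<and> T G (last cs)}"
proof -
  let ?Y = "{cs. trail G cs \<and> T' G (hd cs) \<and> T G (last cs)}"
  have "{{cs, rev cs} | cs. trail G cs \<and>
      ((T G (hd cs) \<and> T' G (last cs)) \<or> (T' G (hd cs) \<and> T G (last cs)))}
      \<subseteq> (\<lambda>cs. {cs, rev cs}) ` ?Y"
  proof clarify
    fix cs assume tr: "trail G cs"
      and ends: "T G (hd cs) \<and> T' G (last cs) \<or> T' G (hd cs) \<and> T G (last cs)"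
    have "cs \<noteq> []" using tr unfolding trail_iff_links by auto
    then have "rev cs \<in> ?Y" if "T G (hd cs)" "T' G (last cs)"
      using trail_rev[OF sm tr] that by (simp add: hd_rev last_rev)
    moreover have "{cs, rev cs} = {rev cs, rev (rev cs)}" by auto
    ultimately show "{cs, rev cs} \<in> (\<lambda>cs. {cs, rev cs}) ` ?Y" using tr ends by blast
  qed
  then have "tau G T T' \<le> card ((\<lambda>cs. {cs, rev cs}) ` ?Y)"
    unfolding tau_def using fin by (intro card_mono) auto
  also have "\<dots> \<le> card ?Y" using fin by (rule card_image_le)
  finally show ?thesis .
qed

lemma nvert_typeA:
  assumes "typeA k G c"
  shows "nvert G c = 0"
proof -
  have "{d \<in> c. dtail G d \<in> dverts G} = {}"
    using assms unfolding typeA_def crossings_def by auto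
  then show ?thesis unfolding nvert_def by (simp only: card.empty)
qed

lemma tau_small_ends_le_inner_darts:
  fixes G :: "('n,'d,'e) drawing"
  assumes sm: "sphere_map G"
  shows "tau G B4 Lc + tau G B5 Lc + tau G A3 Lc + tau G A5 Lc
           \<le> (\<Sum>c\<in>{c \<in> cells G. Lc G c}. card (inner_darts G c))"
proof -
  define L where "L = {c \<in> cells G. Lc G c}"
  define Y where "Y T = {cs. trail G cs \<and> Lc G (hd cs) \<and> T G (last cs)}"
    for T :: "('n,'d,'e) drawing \<Rightarrow> 'd set \<Rightarrow> bool"
  let ?U = "\<Union>c\<in>L. trails_from G c"
  have finL: "finite L" using finite_cells[OF sm] unfolding L_def by simp
  have finU: "finite ?U"
    using finL finite_trails_from[OF sm] unfolding L_def by blast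
  have YU: "Y T \<subseteq> ?U" for T
  proof
    fix cs assume "cs \<in> Y T"
    then have "trail G cs" "Lc G (hd cs)" unfolding Y_def by auto
    moreover from \<open>trail G cs\<close> have "hd cs \<in> cells G" unfolding trail_iff_links
      by (metis hd_in_set le_zero_eq list.size(3) subsetD zero_neq_numeral)
    ultimately show "cs \<in> ?U" unfolding L_def trails_from_def by blast
  qed
  have finY: "finite (Y T)" for T using finite_subset[OF YU finU] .
  have tau_le: "tau G T Lc \<le> card (Y T)" for T
    using tau_le_card_trails[OF sm] finY unfolding Y_def by blast
  have "Y B4 \<inter> Y B5 = {}" "(Y B4 \<union> Y B5) \<inter> Y A3 = {}" "(Y B4 \<union> Y B5 \<union> Y A3) \<inter> Y A5 = {}"
    unfolding Y_def B4_def B5_def using nvert_typeA unfolding typeA_def by fastforce+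
  then have "card (Y B4) + card (Y B5) + card (Y A3) + card (Y A5)
      = card (Y B4 \<union> Y B5 \<union> Y A3 \<union> Y A5)"
    using finY by (simp add: card_Un_disjoint)
  also have "\<dots> \<le> card ?U" using YU finU by (intro card_mono) auto
  also have "\<dots> \<le> (\<Sum>c\<in>L. card (trails_from G c))" by (rule card_UN_le[OF finL])
  also have "\<dots> \<le> (\<Sum>c\<in>L. card (inner_darts G c))"
    using card_trails_from_le[OF sm] unfolding L_def by (intro sum_mono) blast
  finally show ?thesis using tau_le[of B4] tau_le[of B5] tau_le[of A3] tau_le[of A5]
    unfolding L_def by linarith
qed

lemma card_inner_darts_add_U6_le_csize:
  assumes "sphere_map G" "c \<in> cells G"
  shows "card (inner_darts G c) + (if U6 G c then 5 else 0) \<le> csize G c"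
proof (cases "U6 G c")
  case True
  then have "csize G c = 6" unfolding U6_def csize_def nvert_def by simp
  with True show ?thesis using card_inner_darts_U6[OF assms] by simp
qed (simp add: card_inner_darts_le_csize[OF assms])

lemma sum_cells_of_size:
  assumes "finite (cells G)"
  shows "(\<Sum>a\<in>{a. k \<le> a \<and> cells_of_size G a \<noteq> {}}. a * card (cells_of_size G a))
           = (\<Sum>c\<in>{c \<in> cells G. k \<le> csize G c}. csize G c)"
proof -
  let ?I = "{a. k \<le> a \<and> cells_of_size G a \<noteq> {}}"
  let ?L = "{c \<in> cells G. k \<le> csize G c}"
  have "finite ?I"
    by (rule finite_subset[of _ "csize G ` cells G"]) (use assms in \<open>auto simp: cells_of_size_def\<close>)
  have "csize G ` ?L \<subseteq> ?I" unfolding cells_of_size_def by auto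
  have "(\<Sum>a\<in>?I. a * card (cells_of_size G a))
      = (\<Sum>a\<in>?I. sum (csize G) {c \<in> ?L. csize G c = a})"
  proof (rule sum.cong[OF refl])
    fix a assume "a \<in> ?I"
    then have "{c \<in> ?L. csize G c = a} = cells_of_size G a" unfolding cells_of_size_def by auto
    moreover have "sum (csize G) (cells_of_size G a) = a * card (cells_of_size G a)"
      unfolding cells_of_size_def by simp
    ultimately show "a * card (cells_of_size G a) = sum (csize G) {c \<in> ?L. csize G c = a}" by simp
  qed
  also have "\<dots> = sum (csize G) ?L"
    using assms \<open>finite ?I\<close> \<open>csize G ` ?L \<subseteq> ?I\<close> by (intro sum.group) auto
  finally show ?thesis .
qed

lemma Ncount_U6_eq_sum:
  assumes "finite (cells G)"
  shows "k * Ncount G U6 = (\<Sum>c\<in>{c \<in> cells G. Lc G c}. if U6 G c then k else 0)"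
proof -
  have "{c \<in> cells G. U6 G c} = {c \<in> {c \<in> cells G. Lc G c}. U6 G c}"
    unfolding Lc_def U6_def csize_def nvert_def by auto
  then have "k * Ncount G U6 = (\<Sum>c\<in>{c \<in> {c \<in> cells G. Lc G c}. U6 G c}. k)"
    unfolding Ncount_def by simp
  also have "\<dots> = (\<Sum>c\<in>{c \<in> cells G. Lc G c}. if U6 G c then k else 0)"
    using assms by (intro sum.inter_filter) simp
  finally show ?thesis .
qed

theorem mainTheorem4:
  fixes G :: "('n, 'd, 'e) drawing"
  assumes "three_saturated G"
  shows "(\<Sum>a\<in>{a. 6 \<le> a \<and> cells_of_size G a \<noteq> {}}. a * card (cells_of_size G a))
           \<ge> tau G B4 Lc + tau G B5 Lc + tau G A3 Lc + tau G A5 Lc + 5 * Ncount G U6"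
proof -
  have sm: "sphere_map G" using assms unfolding three_saturated_def drawing_def by blast
  define L where "L = {c \<in> cells G. Lc G c}"
  have "5 * Ncount G U6 = (\<Sum>c\<in>L. if U6 G c then 5 else 0)"
    using Ncount_U6_eq_sum[OF finite_cells[OF sm]] unfolding L_def .
  moreover have "(\<Sum>c\<in>L. card (inner_darts G c)) + (\<Sum>c\<in>L. if U6 G c then 5 else 0)
                   \<le> (\<Sum>c\<in>L. csize G c)"
    unfolding sum.distrib[symmetric] L_def
    using card_inner_darts_add_U6_le_csize[OF sm] by (intro sum_mono) blast
  moreover have "(\<Sum>c\<in>L. csize G c)
                   = (\<Sum>a\<in>{a. 6 \<le> a \<and> cells_of_size G a \<noteq> {}}. a * card (cells_of_size G a))"
    using sum_cells_of_size[OF finite_cells[OF sm]] unfolding L_def Lc_def by simp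
  ultimately show ?thesis using tau_small_ends_le_inner_darts[OF sm] unfolding L_def by linarith
qed

end
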